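(* Let $d\ge1$ and let $\Psi$, $B$, $b$ satisfy the standing assumptions (A1)–(A4) in the context. For $t\ge0$ and $V\in C^2(\mathbb{R}^d)$ define $$\mathcal L_t(V)(x)=-\langle\nabla V(x),B(t,x)\nabla\Psi(x)\rangle+\operatorname{div}\big(B(t,x)\nabla V(x)\big),$$ and let $V_a(x)=\exp(a(1+|x|^2)^{1/2})$. Then for every $a>0$ there exist $\lambda,\rho>0$ such that for all $t\ge0$ and all $x\in\mathbb{R}^d$, $$\mathcal L_t(V_a)(x)\le-\lambda V_a(x)+\rho.$$
   Context: $|\cdot|$ is the Euclidean norm on vectors and the operator norm on matrices; $a\vee b=\max\{a,b\}$; $\operatorname{div}B$ is the row-wise divergence $(\operatorname{div}B)_i=\sum_j\partial_{x_j}B_{ij}$, and $\operatorname{div}$ of a vector field is the usual divergence (taken in $x$). Standing assumptions: (A1) $\Psi\in C^2(\mathbb{R}^d)$, $\nabla\Psi$ $L$-Lipschitz, $\nabla\Psi(0)=0$. (A2) $B:[0,\infty)\times\mathbb{R}^d\to\mathbb{R}^{d\times d}$ symmetric with $\beta_lI\preceq B(t,x)\preceq\beta_uI$, $\beta_l,\beta_u>0$. (A3) $B$ is $C^2$ in $x$ and there are $L,n_B>0$, $\delta\ge1/2$ with, for all $x,y$, $s,t>0$: $|B(t,x)-B(t,y)|\vee|\operatorname{div}B(t,x)-\operatorname{div}B(t,y)|\le L(1+|x|^{n_B}+|y|^{n_B})|x-y|$ and $|B(s,x)-B(t,x)|\vee|\operatorname{div}B(s,x)-\operatorname{div}B(t,x)|\le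 L(1+|x|^{n_B})|s-t|^\delta$. (A4) $b(t,x)=-B(t,x)\nabla\Psi(x)+\operatorname{div}B(t,x)$ satisfies $\lim_{r\to\infty}\sup_{|x|\ge r,t\ge0}\langle\frac{x}{|x|},\frac{b(t,x)}{|b(t,x)|}\rangle<0$ and $\lim_{r\to\infty}\inf_{|x|\ge r,t\ge0}|b(t,x)|=\infty$. *)

theory Defs
  imports "HOL-Analysis.Analysis"
begin

text \<open>Vectors in R^d are rendered as real^'n (d = CARD('n) \<ge> 1);
  d x d matrices as real^'n^'n.\<close>

definition partial :: "(real^'n \<Rightarrow> real) \<Rightarrow> 'n \<Rightarrow> real^'n \<Rightarrow> real" where
  "partial f j x = deriv (\<lambda>s. f (x + s *\<^sub>R axis j 1)) 0"

definition has_partials :: "(real^'n \<Rightarrow> real) \<Rightarrow> bool" where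
  "has_partials f \<longleftrightarrow> (\<forall>j x. (\<lambda>s. f (x + s *\<^sub>R axis j 1)) field_differentiable (at 0))"

definition C1_fun :: "(real^'n \<Rightarrow> real) \<Rightarrow> bool" where
  "C1_fun f \<longleftrightarrow> continuous_on UNIV f \<and> has_partials f \<and> (\<forall>j. continuous_on UNIV (partial f j))"

definition C2_fun :: "(real^'n \<Rightarrow> real) \<Rightarrow> bool" where
  "C2_fun f \<longleftrightarrow> C1_fun f \<and> (\<forall>j. C1_fun (partial f j))"

definition grad :: "(real^'n \<Rightarrow> real) \<Rightarrow> real^'n \<Rightarrow> real^'n" where
  "grad f x = (\<chi> j. partial f j x)"

definition divergence :: "(real^'n \<Rightarrow> real^'n) \<Rightarrow> real^'n \<Rightarrow> real" where
  "divergence F x = (\<Sum>j\<in>UNIV. partial (\<lambda>y. F y $ j) j x)"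

text \<open>Row-wise divergence of a matrix field: (div B)_i = sum_j d_j B_ij.\<close>
definition divM :: "(real^'n \<Rightarrow> real^'n^'n) \<Rightarrow> real^'n \<Rightarrow> real^'n" where
  "divM M x = (\<chi> i. \<Sum>j\<in>UNIV. partial (\<lambda>y. M y $ i $ j) j x)"

definition opnorm :: "real^'n^'n \<Rightarrow> real" where
  "opnorm M = onorm (\<lambda>v. M *v v)"

definition drift :: "(real \<Rightarrow> real^'n \<Rightarrow> real^'n^'n) \<Rightarrow> (real^'n \<Rightarrow> real) \<Rightarrow> real \<Rightarrow> real^'n \<Rightarrow> real^'n" where
  "drift B \<Psi> t x = - (B t x *v grad \<Psi> x) + divM (B t) x"

definition genL :: "(real \<Rightarrow> real^'n \<Rightarrow> real^'n^'n) \<Rightarrow> (real^'n \<Rightarrow> real) \<Rightarrow> real \<Rightarrow> (real^'n \<Rightarrow> real) \<Rightarrow> real^'n \<Rightarrow> real" where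
  "genL B \<Psi> t V x = - (grad V x \<bullet> (B t x *v grad \<Psi> x)) + divergence (\<lambda>y. B t y *v grad V y) x"

definition Va :: "real \<Rightarrow> real^'n \<Rightarrow> real" where
  "Va a x = exp (a * sqrt (1 + (norm x)\<^sup>2))"

end

(*
  With jb(x) = sqrt (1 + |x|^2) one has grad V_a = a V_a jb(x)^-1 x, so for symmetric B
    L_t V_a = a V_a jb(x)^-1 <x, b(t,x)> + a V_a jb(x)^-1 tr B + a V_a (a jb(x)^-2 - jb(x)^-3) <x, B x>
           <= V_a (a jb(x)^-1 <x, b(t,x)> + K)
  with K depending only on a, d and beta_u.  By (A4), <x, b(t,x)> <= -C |x| outside a large ball
  for any prescribed C, which makes the bracket at most -1 there.  On the ball, <x, b(t,x)> is
  bounded uniformly in t: the term <x, B grad Psi> by (A1) and (A2); the term <x, div B(t,x)>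
  for t > 0 by comparison with the point y = R x / |x| of the sphere, where (A4) gives
  <y, div B(t,y)> <= <y, B grad Psi(y)>, and the spatial Lipschitz bound of (A3), which is
  uniform in t; for t = 0, where (A3) says nothing, by continuity on the compact ball.
*)

theory Submission
  imports Defs
begin

lemma has_partials_has_field_derivative:
  assumes "has_partials f"
  shows "((\<lambda>s. f (x + s *\<^sub>R axis j 1)) has_field_derivative partial f j x) (at 0)"
  using assms unfolding has_partials_def partial_def
  by (simp add: DERIV_deriv_iff_field_differentiable)

lemma partial_eqI:
  assumes "((\<lambda>s. f (x + s *\<^sub>R axis j 1)) has_field_derivative D) (at 0)"
  shows "partial f j x = D"
  using assms unfolding partial_def by (rule DERIV_imp_deriv)

definition japanese_bracket :: "real^'n \<Rightarrow> real" where
  "japanese_bracket x = sqrt (1 + (norm x)\<^sup>2)"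

lemma japanese_bracket_ge_1: "1 \<le> japanese_bracket x"
  unfolding japanese_bracket_def by simp

lemma japanese_bracket_pos: "0 < japanese_bracket x"
  using japanese_bracket_ge_1 [of x] by linarith

lemma japanese_bracket_le: "norm x \<le> R \<Longrightarrow> japanese_bracket x \<le> sqrt (1 + R\<^sup>2)"
  unfolding japanese_bracket_def by (simp add: power_mono)

lemma japanese_bracket_le_twice_norm:
  assumes "1 \<le> norm x"
  shows "japanese_bracket x \<le> 2 * norm x"
proof (rule power2_le_imp_le)
  have "1 \<le> (norm x)\<^sup>2" using assms by (simp add: one_le_power)
  then show "(japanese_bracket x)\<^sup>2 \<le> (2 * norm x)\<^sup>2"
    unfolding japanese_bracket_def by simp
qed simp

lemma norm_add_axis_power2:
  fixes x :: "real^'n"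
  shows "(norm (x + s *\<^sub>R axis j 1))\<^sup>2 = (norm x)\<^sup>2 + 2 * s * x$j + s\<^sup>2"
  unfolding power2_norm_eq_inner
  by (simp add: inner_add_left inner_add_right inner_axis inner_axis' power2_eq_square inner_commute)

lemma japanese_bracket_axis_deriv:
  fixes x :: "real^'n"
  shows "((\<lambda>s. japanese_bracket (x + s *\<^sub>R axis j 1))
           has_field_derivative x$j / japanese_bracket x) (at 0)"
proof -
  have "((\<lambda>s. sqrt (1 + ((norm x)\<^sup>2 + 2 * s * x$j + s\<^sup>2))) has_field_derivative
          x$j / sqrt (1 + (norm x)\<^sup>2)) (at 0)"
    using add_pos_nonneg [of 1 "(norm x)\<^sup>2"] by (auto intro!: derivative_eq_intros simp: divide_simps)
  then show ?thesis
    by (simp add: japanese_bracket_def norm_add_axis_power2)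
qed

lemma Va_eq_exp_japanese_bracket: "Va a x = exp (a * japanese_bracket x)"
  unfolding Va_def japanese_bracket_def ..

definition Va_grad_coeff :: "real \<Rightarrow> real^'n \<Rightarrow> real" where
  "Va_grad_coeff a x = a * Va a x / japanese_bracket x"

definition Va_grad_coeff_rate :: "real \<Rightarrow> real^'n \<Rightarrow> real" where
  "Va_grad_coeff_rate a x = a * Va a x * (a / (japanese_bracket x)\<^sup>2 - 1 / (japanese_bracket x)^3)"

lemma Va_axis_deriv:
  fixes x :: "real^'n"
  shows "((\<lambda>s. Va a (x + s *\<^sub>R axis j 1)) has_field_derivative Va_grad_coeff a x * x$j) (at 0)"
  unfolding Va_eq_exp_japanese_bracket Va_grad_coeff_def
  by (auto intro!: derivative_eq_intros japanese_bracket_axis_deriv simp: divide_simps)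

lemma grad_Va: "grad (Va a) x = Va_grad_coeff a x *\<^sub>R x"
  by (simp add: grad_def vec_eq_iff partial_eqI [OF Va_axis_deriv])

lemma Va_grad_coeff_axis_deriv:
  fixes x :: "real^'n"
  shows "((\<lambda>s. Va_grad_coeff a (x + s *\<^sub>R axis j 1)) has_field_derivative Va_grad_coeff_rate a x * x$j) (at 0)"
  unfolding Va_grad_coeff_def
  by (rule DERIV_cong [OF DERIV_divide [OF DERIV_cmult [OF Va_axis_deriv] japanese_bracket_axis_deriv]])
    (use japanese_bracket_pos [of x] in
      \<open>auto simp: Va_grad_coeff_def Va_grad_coeff_rate_def field_simps power2_eq_square power3_eq_cube\<close>)

lemma partial_matrix_radial_field_component:
  fixes M :: "real^'n \<Rightarrow> real^'n^'n" and c :: "real^'n \<Rightarrow> real"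
  assumes M: "\<forall>i k. has_partials (\<lambda>y. M y $ i $ k)"
    and c: "\<And>k. ((\<lambda>s. c (x + s *\<^sub>R axis k 1)) has_field_derivative \<gamma> * x$k) (at 0)"
  shows "partial (\<lambda>y. (M y *v (c y *\<^sub>R y)) $ j) j x =
    (\<Sum>k\<in>UNIV. partial (\<lambda>y. M y $ j $ k) j x * (c x * x$k)
       + M x $ j $ k * (\<gamma> * x$j * x$k + c x * axis j 1 $ k))"
proof (rule partial_eqI)
  have "((\<lambda>s. M (x + s *\<^sub>R axis j 1) $ j $ k * (c (x + s *\<^sub>R axis j 1) * (x + s *\<^sub>R axis j 1) $ k))
      has_field_derivative partial (\<lambda>y. M y $ j $ k) j x * (c x * x$k)
        + M x $ j $ k * (\<gamma> * x$j * x$k + c x * axis j 1 $ k)) (at 0)" for k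
    using has_partials_has_field_derivative [of "\<lambda>y. M y $ j $ k"] M
    by (auto intro!: derivative_eq_intros c simp: algebra_simps)
  then show "((\<lambda>s. (M (x + s *\<^sub>R axis j 1) *v (c (x + s *\<^sub>R axis j 1) *\<^sub>R (x + s *\<^sub>R axis j 1))) $ j)
      has_field_derivative (\<Sum>k\<in>UNIV. partial (\<lambda>y. M y $ j $ k) j x * (c x * x$k)
       + M x $ j $ k * (\<gamma> * x$j * x$k + c x * axis j 1 $ k))) (at 0)"
    by (simp add: matrix_vector_mult_def DERIV_sum)
qed

lemma sum_axis_right: "(\<Sum>k\<in>UNIV. f k * axis j (1::real) $ k) = f j"
  by (simp add: axis_def if_distrib [of "\<lambda>u. _ * u"] cong: if_cong)

lemma divergence_matrix_radial_field:
  fixes M :: "real^'n \<Rightarrow> real^'n^'n" and c :: "real^'n \<Rightarrow> real"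
  assumes M: "\<forall>i k. has_partials (\<lambda>y. M y $ i $ k)"
    and sym: "\<forall>y. transpose (M y) = M y"
    and c: "\<And>k. ((\<lambda>s. c (x + s *\<^sub>R axis k 1)) has_field_derivative \<gamma> * x$k) (at 0)"
  shows "divergence (\<lambda>y. M y *v (c y *\<^sub>R y)) x
    = c x * (x \<bullet> divM M x) + c x * trace (M x) + \<gamma> * (x \<bullet> (M x *v x))"
proof -
  have entry_sym: "(\<lambda>y. M y $ j $ k) = (\<lambda>y. M y $ k $ j)" for j k
    using sym by (metis transpose_def vec_lambda_beta)
  have "divergence (\<lambda>y. M y *v (c y *\<^sub>R y)) x
      = (\<Sum>j\<in>UNIV. \<Sum>k\<in>UNIV. partial (\<lambda>y. M y $ j $ k) j x * (c x * x$k))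
      + (\<Sum>j\<in>UNIV. \<Sum>k\<in>UNIV. \<gamma> * (x$j * (M x $ j $ k * x$k)))
      + (\<Sum>j\<in>UNIV. \<Sum>k\<in>UNIV. c x * (M x $ j $ k * axis j 1 $ k))"
    unfolding divergence_def partial_matrix_radial_field_component [OF M c]
    by (simp add: sum.distrib algebra_simps)
  also have "(\<Sum>j\<in>UNIV. \<Sum>k\<in>UNIV. partial (\<lambda>y. M y $ j $ k) j x * (c x * x$k)) = c x * (x \<bullet> divM M x)"
    unfolding divM_def inner_vec_def
    by (subst sum.swap) (simp add: sum_distrib_left sum_distrib_right entry_sym algebra_simps)
  also have "(\<Sum>j\<in>UNIV. \<Sum>k\<in>UNIV. \<gamma> * (x$j * (M x $ j $ k * x$k))) = \<gamma> * (x \<bullet> (M x *v x))"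
    unfolding inner_vec_def matrix_vector_mult_def by (simp add: sum_distrib_left)
  also have "(\<Sum>j\<in>UNIV. \<Sum>k\<in>UNIV. c x * (M x $ j $ k * axis j 1 $ k)) = c x * trace (M x)"
    unfolding trace_def by (simp add: sum_distrib_left [symmetric] mult.assoc [symmetric] sum_axis_right)
  finally show ?thesis by simp
qed

lemma axis_inner_matrix_axis: "axis j 1 \<bullet> (M *v axis j 1) = (M::real^'n^'n) $ j $ j"
  unfolding inner_axis' matrix_vector_mult_def by (simp add: sum_axis_right)

lemma trace_le_of_quadratic_form_le:
  fixes M :: "real^'n^'n"
  assumes "\<forall>v. v \<bullet> (M *v v) \<le> \<beta> * (v \<bullet> v)"
  shows "trace M \<le> real CARD('n) * \<beta>"
proof -
  have "M $ j $ j \<le> \<beta>" for j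
    using assms [rule_format, of "axis j 1"] by (simp add: axis_inner_matrix_axis inner_axis_axis)
  then have "trace M \<le> (\<Sum>j\<in>(UNIV::'n set). \<beta>)"
    unfolding trace_def by (rule sum_mono)
  then show ?thesis by simp
qed

lemma abs_inner_symmetric_matrix_le:
  fixes M :: "real^'n^'n"
  assumes sym: "transpose M = M" and "0 \<le> \<beta>"
    and form: "\<forall>v. 0 \<le> v \<bullet> (M *v v) \<and> v \<bullet> (M *v v) \<le> \<beta> * (v \<bullet> v)"
  shows "\<bar>x \<bullet> (M *v w)\<bar> \<le> \<beta> / 2 * ((norm x)\<^sup>2 + (norm w)\<^sup>2)"
proof -
  have swap: "w \<bullet> (M *v x) = x \<bullet> (M *v w)"
    by (metis sym dot_lmul_matrix inner_commute vector_transpose_matrix)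
  have polarization: "4 * (x \<bullet> (M *v w)) = (x + w) \<bullet> (M *v (x + w)) - (x - w) \<bullet> (M *v (x - w))"
    by (simp add: algebra_simps swap)
  have "(x + w) \<bullet> (M *v (x + w)) \<le> \<beta> * ((x + w) \<bullet> (x + w))"
    and "(x - w) \<bullet> (M *v (x - w)) \<le> \<beta> * ((x - w) \<bullet> (x - w))"
    and "0 \<le> (x + w) \<bullet> (M *v (x + w))" and "0 \<le> (x - w) \<bullet> (M *v (x - w))"
    using form by blast+
  moreover have "0 \<le> \<beta> * ((x + w) \<bullet> (x + w))" "0 \<le> \<beta> * ((x - w) \<bullet> (x - w))"
    using \<open>0 \<le> \<beta>\<close> by simp_all
  ultimately have "\<bar>4 * (x \<bullet> (M *v w))\<bar> \<le> \<beta> * ((x + w) \<bullet> (x + w)) + \<beta> * ((x - w) \<bullet> (x - w))"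
    unfolding polarization by linarith
  also have "\<dots> = \<beta> * (2 * (x \<bullet> x + w \<bullet> w))"
  proof -
    have "(x + w) \<bullet> (x + w) + (x - w) \<bullet> (x - w) = 2 * (x \<bullet> x + w \<bullet> w)"
      by (simp add: inner_add_left inner_add_right inner_diff_left inner_diff_right inner_commute)
    then show ?thesis by (metis distrib_left)
  qed
  finally have "\<bar>x \<bullet> (M *v w)\<bar> * 4 \<le> \<beta> * 2 * (x \<bullet> x + w \<bullet> w)"
    by (simp add: abs_mult algebra_simps)
  moreover have "\<beta> / 2 * (x \<bullet> x + w \<bullet> w) = \<beta> * 2 * (x \<bullet> x + w \<bullet> w) / 4"
    by simp
  ultimately show ?thesis unfolding power2_norm_eq_inner by linarith
qed

lemma genL_Va_le:
  fixes B :: "real \<Rightarrow> real^'n \<Rightarrow> real^'n^'n"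
  assumes "0 < a" "0 \<le> \<beta>"
    and partials: "\<forall>i j. has_partials (\<lambda>x. B t x $ i $ j)"
    and sym: "\<forall>x. transpose (B t x) = B t x"
    and form: "\<forall>x v. 0 \<le> v \<bullet> (B t x *v v) \<and> v \<bullet> (B t x *v v) \<le> \<beta> * (v \<bullet> v)"
  shows "genL B \<Psi> t (Va a) x
    \<le> Va a x * (a / japanese_bracket x * (x \<bullet> drift B \<Psi> t x) + a * real CARD('n) * \<beta> + a\<^sup>2 * \<beta>)"
proof -
  let ?V = "Va a x" and ?p = "japanese_bracket x" and ?q = "x \<bullet> (B t x *v x)"
  have "0 < ?V" "1 \<le> ?p" by (simp_all add: Va_def japanese_bracket_ge_1)
  have "genL B \<Psi> t (Va a) x
      = Va_grad_coeff a x * (x \<bullet> drift B \<Psi> t x) + Va_grad_coeff a x * trace (B t x) + Va_grad_coeff_rate a x * ?q"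
    unfolding genL_def drift_def grad_Va divergence_matrix_radial_field [OF partials sym Va_grad_coeff_axis_deriv]
    by (simp add: algebra_simps)
  moreover have "Va_grad_coeff a x * trace (B t x) \<le> ?V * (a * real CARD('n) * \<beta>)"
  proof -
    have "0 \<le> Va_grad_coeff a x" "Va_grad_coeff a x \<le> a * ?V"
      unfolding Va_grad_coeff_def using \<open>0 < a\<close> \<open>0 < ?V\<close> \<open>1 \<le> ?p\<close>
      by (auto simp: divide_simps mult_le_cancel_left_pos)
    moreover have "trace (B t x) \<le> real CARD('n) * \<beta>"
      by (rule trace_le_of_quadratic_form_le) (simp add: form)
    ultimately have "Va_grad_coeff a x * trace (B t x) \<le> Va_grad_coeff a x * (real CARD('n) * \<beta>)"
      by (intro mult_left_mono)
    also have "\<dots> \<le> (a * ?V) * (real CARD('n) * \<beta>)"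
      using \<open>Va_grad_coeff a x \<le> a * ?V\<close> \<open>0 \<le> \<beta>\<close> by (intro mult_right_mono) auto
    finally show ?thesis by (simp add: algebra_simps)
  qed
  moreover have "Va_grad_coeff_rate a x * ?q \<le> ?V * (a\<^sup>2 * \<beta>)"
  proof -
    have "0 \<le> ?q" "?q \<le> \<beta> * (x \<bullet> x)"
      using form by blast+
    moreover have "\<beta> * (x \<bullet> x) \<le> \<beta> * ?p\<^sup>2"
      using \<open>0 \<le> \<beta>\<close> by (simp add: japanese_bracket_def power2_norm_eq_inner mult_left_mono)
    ultimately have "?q \<le> \<beta> * ?p\<^sup>2" by linarith
    have "Va_grad_coeff_rate a x * ?q \<le> a\<^sup>2 * ?V * ?q / ?p\<^sup>2"
      unfolding Va_grad_coeff_rate_def using \<open>0 < a\<close> \<open>0 < ?V\<close> \<open>0 \<le> ?q\<close> \<open>1 \<le> ?p\<close>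
      by (simp add: field_simps power2_eq_square)
    also have "\<dots> \<le> a\<^sup>2 * ?V * (\<beta> * ?p\<^sup>2) / ?p\<^sup>2"
      using \<open>0 < ?V\<close> \<open>?q \<le> \<beta> * ?p\<^sup>2\<close> by (intro divide_right_mono mult_left_mono) auto
    finally show ?thesis using japanese_bracket_pos [of x] by (simp add: algebra_simps)
  qed
  ultimately show ?thesis by (simp add: Va_grad_coeff_def algebra_simps)
qed

lemma ex_radius_lt_of_Sup_tendsto:
  fixes f :: "'a::real_normed_vector \<Rightarrow> real \<Rightarrow> real"
  assumes lim: "((\<lambda>r. Sup {f x t | x t. norm x \<ge> r \<and> t \<ge> 0}) \<longlongrightarrow> l) at_top"
    and "l < m" and bdd: "\<forall>x t. f x t \<le> c"
  shows "\<exists>r. \<forall>t\<ge>0. \<forall>x. r \<le> norm x \<longrightarrow> f x t < m"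
proof -
  obtain r where r: "Sup {f x t | x t. norm x \<ge> r \<and> t \<ge> 0} < m"
    using eventually_happens' [OF _ order_tendstoD(2) [OF lim \<open>l < m\<close>]] by auto
  have "f x t \<le> Sup {f x t | x t. norm x \<ge> r \<and> t \<ge> 0}" if "r \<le> norm x" "0 \<le> t" for x t
    using that bdd by (intro cSup_upper bdd_aboveI [of _ c]) auto
  with r show ?thesis by fastforce
qed

lemma ex_radius_ge_of_Inf_filterlim:
  fixes g :: "'a::real_normed_vector \<Rightarrow> real \<Rightarrow> real"
  assumes lim: "filterlim (\<lambda>r. Inf {g x t | x t. norm x \<ge> r \<and> t \<ge> 0}) at_top at_top"
    and bdd: "\<forall>x t. c \<le> g x t"
  shows "\<exists>r. \<forall>t\<ge>0. \<forall>x. r \<le> norm x \<longrightarrow> m \<le> g x t"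
proof -
  obtain r where r: "m \<le> Inf {g x t | x t. norm x \<ge> r \<and> t \<ge> 0}"
    using lim unfolding filterlim_at_top eventually_at_top_linorder by blast
  have "Inf {g x t | x t. norm x \<ge> r \<and> t \<ge> 0} \<le> g x t" if "r \<le> norm x" "0 \<le> t" for x t
    using that bdd by (intro cInf_lower bdd_belowI [of _ c]) auto
  with r show ?thesis by fastforce
qed

lemma inner_normalized_le_1:
  fixes x y :: "'a::real_inner"
  shows "((1 / norm x) *\<^sub>R x) \<bullet> ((1 / norm y) *\<^sub>R y) \<le> 1"
proof -
  have "norm ((1 / norm z) *\<^sub>R z) \<le> 1" for z :: 'a
    by (cases "z = 0") auto
  then show ?thesis
    using norm_cauchy_schwarz order_trans mult_le_one norm_ge_zero by metis
qed

lemma inner_le_of_normalized_inner_le: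
  fixes x y :: "'a::real_inner"
  assumes "x \<noteq> 0" "y \<noteq> 0" "((1 / norm x) *\<^sub>R x) \<bullet> ((1 / norm y) *\<^sub>R y) \<le> \<kappa>"
    and "\<kappa> \<le> 0" "m \<le> norm y"
  shows "x \<bullet> y \<le> \<kappa> * m * norm x"
proof -
  have "x \<bullet> y = norm x * norm y * (((1 / norm x) *\<^sub>R x) \<bullet> ((1 / norm y) *\<^sub>R y))"
    using assms(1,2) by simp
  also have "\<dots> \<le> norm x * norm y * \<kappa>"
    using assms(3) by (intro mult_left_mono) auto
  also have "\<dots> \<le> norm x * m * \<kappa>"
    using assms(4,5) by (intro mult_right_mono_neg mult_left_mono) auto
  finally show ?thesis by (simp add: algebra_simps)
qed

lemma ex_radius_inner_le_neg_norm:
  fixes b :: "real \<Rightarrow> 'a::real_inner \<Rightarrow> 'a"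
  assumes dir: "\<exists>l<0. ((\<lambda>r. Sup {((1 / norm x) *\<^sub>R x) \<bullet> ((1 / norm (b t x)) *\<^sub>R b t x)
                              | x t. norm x \<ge> r \<and> t \<ge> 0}) \<longlongrightarrow> l) at_top"
    and mag: "filterlim (\<lambda>r. Inf {norm (b t x) | x t. norm x \<ge> r \<and> t \<ge> 0}) at_top at_top"
  shows "\<exists>R\<ge>1. \<forall>t\<ge>0. \<forall>x. R \<le> norm x \<longrightarrow> x \<bullet> b t x \<le> - C * norm x"
proof -
  obtain l where "l < 0" and lim: "((\<lambda>r. Sup {((1 / norm x) *\<^sub>R x) \<bullet> ((1 / norm (b t x)) *\<^sub>R b t x)
                              | x t. norm x \<ge> r \<and> t \<ge> 0}) \<longlongrightarrow> l) at_top"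
    using dir by blast
  define m where "m = max 1 (2 * C / (- l))"
  have "\<exists>r1. \<forall>t\<ge>0. \<forall>x. r1 \<le> norm x \<longrightarrow>
      ((1 / norm x) *\<^sub>R x) \<bullet> ((1 / norm (b t x)) *\<^sub>R b t x) < l / 2"
    using \<open>l < 0\<close> inner_normalized_le_1 by (intro ex_radius_lt_of_Sup_tendsto [OF lim]) auto
  then obtain r1 where r1: "\<forall>t\<ge>0. \<forall>x. r1 \<le> norm x \<longrightarrow>
      ((1 / norm x) *\<^sub>R x) \<bullet> ((1 / norm (b t x)) *\<^sub>R b t x) < l / 2"
    by blast
  have "\<exists>r2. \<forall>t\<ge>0. \<forall>x. r2 \<le> norm x \<longrightarrow> m \<le> norm (b t x)"
    by (rule ex_radius_ge_of_Inf_filterlim [OF mag, of 0]) simp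
  then obtain r2 where r2: "\<forall>t\<ge>0. \<forall>x. r2 \<le> norm x \<longrightarrow> m \<le> norm (b t x)"
    by blast
  have "x \<bullet> b t x \<le> - C * norm x" if "0 \<le> t" "max 1 (max r1 r2) \<le> norm x" for t x
  proof -
    have "x \<noteq> 0" "m \<le> norm (b t x)" using that r2 by auto
    moreover have "b t x \<noteq> 0" using \<open>m \<le> norm (b t x)\<close> by (auto simp: m_def)
    moreover have "((1 / norm x) *\<^sub>R x) \<bullet> ((1 / norm (b t x)) *\<^sub>R b t x) \<le> l / 2"
      using r1 that by (simp only: less_imp_le max.bounded_iff)
    ultimately have "x \<bullet> b t x \<le> l / 2 * m * norm x"
      using \<open>l < 0\<close> by (intro inner_le_of_normalized_inner_le) auto
    also have "\<dots> \<le> - C * norm x"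
    proof (rule mult_right_mono)
      have "2 * C / (- l) \<le> m" by (simp add: m_def)
      then show "l / 2 * m \<le> - C" using \<open>l < 0\<close> by (simp add: field_simps)
    qed simp
    finally show ?thesis .
  qed
  then show ?thesis by (intro exI [of _ "max 1 (max r1 r2)"]) auto
qed

lemma inner_le_on_cball_of_sphere:
  fixes D :: "'a::real_inner \<Rightarrow> 'a"
  assumes "0 < R" "0 \<le> C" "0 \<le> K" "norm x \<le> R"
    and sphere: "\<forall>y. norm y = R \<longrightarrow> y \<bullet> D y \<le> C"
    and osc: "\<forall>y. norm y = R \<longrightarrow> norm (D x - D y) \<le> K"
  shows "x \<bullet> D x \<le> C + R * K"
proof (cases "x = 0")
  case False
  define y where "y = (R / norm x) *\<^sub>R x"
  have "norm y = R"
    using False \<open>0 < R\<close> by (simp add: y_def)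
  have "x \<bullet> D y = norm x / R * (y \<bullet> D y)"
    using False \<open>0 < R\<close> by (simp add: y_def)
  also have "\<dots> \<le> norm x / R * C"
    using sphere \<open>norm y = R\<close> \<open>0 < R\<close> by (intro mult_left_mono) auto
  also have "\<dots> \<le> C"
    using \<open>0 < R\<close> \<open>norm x \<le> R\<close> \<open>0 \<le> C\<close> by (intro mult_left_le_one_le) auto
  finally have "x \<bullet> D y \<le> C" .
  moreover have "x \<bullet> (D x - D y) \<le> norm x * norm (D x - D y)"
    by (rule norm_cauchy_schwarz)
  moreover have "norm x * norm (D x - D y) \<le> R * K"
    using osc \<open>norm y = R\<close> \<open>norm x \<le> R\<close> \<open>0 \<le> K\<close> by (intro mult_mono) auto
  ultimately show ?thesis by (simp add: inner_diff_right)
qed (use assms in simp)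

lemma growth_Lipschitz_factor_le:
  fixes x y :: "'a::real_normed_vector"
  assumes "0 \<le> L" "0 \<le> n" "norm x \<le> R" "norm y \<le> R"
  shows "L * (1 + norm x powr n + norm y powr n) * norm (x - y) \<le> L * (1 + 2 * R powr n) * (2 * R)"
proof (rule mult_mono)
  have "norm x powr n \<le> R powr n" "norm y powr n \<le> R powr n"
    using assms by (simp_all add: powr_mono2)
  then show "L * (1 + norm x powr n + norm y powr n) \<le> L * (1 + 2 * R powr n)"
    using \<open>0 \<le> L\<close> by (intro mult_left_mono) auto
  show "norm (x - y) \<le> 2 * R"
    using norm_triangle_ineq4 [of x y] assms by linarith
qed (use assms in auto)

lemma continuous_on_divM:
  assumes "\<forall>i j. continuous_on UNIV (partial (\<lambda>x. M x $ i $ j) j)"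
  shows "continuous_on S (divM M)"
  unfolding divM_def
  by (intro continuous_on_vec_lambda continuous_on_sum continuous_on_subset [OF assms [rule_format]])
    auto

lemma inner_drift_bounded_on_cball:
  fixes \<Psi> :: "real^'n \<Rightarrow> real" and B :: "real \<Rightarrow> real^'n \<Rightarrow> real^'n^'n"
  assumes grad_Lip: "\<forall>x y. norm (grad \<Psi> x - grad \<Psi> y) \<le> L * norm (x - y)" and "grad \<Psi> 0 = 0"
    and sym: "\<forall>t\<ge>0. \<forall>x. transpose (B t x) = B t x"
    and form: "\<forall>t\<ge>0. \<forall>x v. 0 \<le> v \<bullet> (B t x *v v) \<and> v \<bullet> (B t x *v v) \<le> \<beta> * (v \<bullet> v)"
    and "0 \<le> \<beta>"
    and cont0: "\<forall>i j. continuous_on UNIV (partial (\<lambda>x. B 0 x $ i $ j) j)"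
    and div_Lip: "\<forall>t>0. \<forall>x y. norm (divM (B t) x - divM (B t) y)
                              \<le> L * (1 + norm x powr n + norm y powr n) * norm (x - y)"
    and "0 \<le> L" "0 \<le> n" "0 < R"
    and sphere: "\<forall>t\<ge>0. \<forall>y. norm y = R \<longrightarrow> y \<bullet> drift B \<Psi> t y \<le> 0"
  shows "\<exists>M. \<forall>t\<ge>0. \<forall>x. norm x \<le> R \<longrightarrow> x \<bullet> drift B \<Psi> t x \<le> M"
proof -
  define C where "C = \<beta> / 2 * (R\<^sup>2 + (L * R)\<^sup>2)"
  define K where "K = L * (1 + 2 * R powr n) * (2 * R)"
  have "0 \<le> C" "0 \<le> K"
    using \<open>0 \<le> \<beta>\<close> \<open>0 \<le> L\<close> \<open>0 < R\<close> by (simp_all add: C_def K_def)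
  have inner_drift: "x \<bullet> drift B \<Psi> t x = x \<bullet> divM (B t) x - x \<bullet> (B t x *v grad \<Psi> x)" for t x
    by (simp add: drift_def inner_diff_right)
  have potential_part: "\<bar>x \<bullet> (B t x *v grad \<Psi> x)\<bar> \<le> C" if "0 \<le> t" "norm x \<le> R" for t x
  proof -
    have "norm (grad \<Psi> x) \<le> L * R"
      using grad_Lip \<open>grad \<Psi> 0 = 0\<close> \<open>norm x \<le> R\<close> \<open>0 \<le> L\<close>
      by (metis diff_zero mult_left_mono order_trans)
    then have "(norm x)\<^sup>2 + (norm (grad \<Psi> x))\<^sup>2 \<le> R\<^sup>2 + (L * R)\<^sup>2"
      using \<open>norm x \<le> R\<close> by (intro add_mono power_mono) auto
    moreover have "\<bar>x \<bullet> (B t x *v grad \<Psi> x)\<bar> \<le> \<beta> / 2 * ((norm x)\<^sup>2 + (norm (grad \<Psi> x))\<^sup>2)"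
      using sym form \<open>0 \<le> t\<close> \<open>0 \<le> \<beta>\<close> by (intro abs_inner_symmetric_matrix_le) auto
    ultimately show ?thesis
      unfolding C_def using \<open>0 \<le> \<beta>\<close> by (meson divide_nonneg_nonneg mult_left_mono order_trans zero_le_numeral)
  qed
  have "x \<bullet> divM (B t) x \<le> C + R * K" if "0 < t" "norm x \<le> R" for t x
  proof (rule inner_le_on_cball_of_sphere [OF \<open>0 < R\<close> \<open>0 \<le> C\<close> \<open>0 \<le> K\<close> \<open>norm x \<le> R\<close>])
    show "\<forall>y. norm y = R \<longrightarrow> y \<bullet> divM (B t) y \<le> C"
    proof (intro allI impI)
      fix y :: "real^'n"
      assume "norm y = R"
      then have "y \<bullet> drift B \<Psi> t y \<le> 0" "\<bar>y \<bullet> (B t y *v grad \<Psi> y)\<bar> \<le> C"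
        using sphere potential_part \<open>0 < t\<close> by auto
      then show "y \<bullet> divM (B t) y \<le> C"
        using inner_drift [of y t] by linarith
    qed
    show "\<forall>y. norm y = R \<longrightarrow> norm (divM (B t) x - divM (B t) y) \<le> K"
      using div_Lip \<open>0 < t\<close> growth_Lipschitz_factor_le [OF \<open>0 \<le> L\<close> \<open>0 \<le> n\<close> \<open>norm x \<le> R\<close>]
      unfolding K_def by (meson order_refl order_trans)
  qed
  moreover obtain C' where "\<forall>x\<in>cball 0 R. x \<bullet> divM (B 0) x \<le> C'"
  proof -
    have "cball 0 R \<noteq> {}" "continuous_on (cball 0 R) (\<lambda>x. x \<bullet> divM (B 0) x)"
      using \<open>0 < R\<close> by (auto intro: continuous_on_inner continuous_on_divM [OF cont0])
    from continuous_attains_sup [OF compact_cball this] show ?thesis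
      using that by blast
  qed
  ultimately have "x \<bullet> divM (B t) x \<le> max (C + R * K) C'" if "0 \<le> t" "norm x \<le> R" for t x
    using that by (cases "t = 0") (auto simp: le_max_iff_disj)
  then have "x \<bullet> drift B \<Psi> t x \<le> max (C + R * K) C' + C" if "0 \<le> t" "norm x \<le> R" for t x
    using that potential_part [OF that] inner_drift [of x t] by fastforce
  then show ?thesis by blast
qed

lemma Va_drift_condition:
  fixes G :: "real \<Rightarrow> real^'n \<Rightarrow> real" and b :: "real \<Rightarrow> real^'n \<Rightarrow> real^'n"
  assumes "0 < a" "0 \<le> K" "1 \<le> R"
    and G: "\<forall>t\<ge>0. \<forall>x. G t x \<le> Va a x * (a / japanese_bracket x * (x \<bullet> b t x) + K)"
    and far: "\<forall>t\<ge>0. \<forall>x. R \<le> norm x \<longrightarrow> x \<bullet> b t x \<le> - (2 * (K + 1) / a) * norm x"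
    and near: "\<forall>t\<ge>0. \<forall>x. norm x \<le> R \<longrightarrow> x \<bullet> b t x \<le> M"
  shows "\<exists>\<rho>>0. \<forall>t\<ge>0. \<forall>x. G t x \<le> - Va a x + \<rho>"
proof -
  define V\<^sub>R where "V\<^sub>R = exp (a * sqrt (1 + R\<^sup>2))"
  define \<rho> where "\<rho> = V\<^sub>R * (a * max M 0 + K + 1)"
  have "0 < \<rho>"
    using \<open>0 < a\<close> \<open>0 \<le> K\<close> by (simp add: \<rho>_def V\<^sub>R_def add_nonneg_pos)
  have "G t x \<le> - Va a x + \<rho>" if "0 \<le> t" for t x
  proof (cases "R \<le> norm x")
    case True
    let ?p = "japanese_bracket x"
    have "0 < ?p" "?p \<le> 2 * norm x"
      using japanese_bracket_pos japanese_bracket_le_twice_norm [of x] True \<open>1 \<le> R\<close> by auto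
    then have "1 \<le> 2 * norm x / ?p" by (simp add: le_divide_eq_1_pos)
    have "a / ?p * (x \<bullet> b t x) \<le> a / ?p * (- (2 * (K + 1) / a) * norm x)"
      using far \<open>0 \<le> t\<close> True \<open>0 < a\<close> \<open>0 < ?p\<close> by (intro mult_left_mono) auto
    also have "\<dots> = - (K + 1) * (2 * norm x / ?p)"
      using \<open>0 < a\<close> \<open>0 < ?p\<close> by (simp add: field_simps)
    also have "\<dots> \<le> - (K + 1) * 1"
      using \<open>1 \<le> 2 * norm x / ?p\<close> \<open>0 \<le> K\<close> by (intro mult_left_mono_neg) auto
    finally have "a / ?p * (x \<bullet> b t x) + K \<le> - 1" by simp
    then have "Va a x * (a / ?p * (x \<bullet> b t x) + K) \<le> Va a x * (- 1)"
      by (intro mult_left_mono) (simp_all add: Va_def)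
    then show ?thesis
      using G [rule_format, OF \<open>0 \<le> t\<close>, of x] \<open>0 < \<rho>\<close> by linarith
  next
    case False
    let ?p = "japanese_bracket x"
    have "Va a x \<le> V\<^sub>R"
      using False \<open>0 < a\<close> japanese_bracket_le [of x R]
      by (simp add: Va_eq_exp_japanese_bracket V\<^sub>R_def)
    have "x \<bullet> b t x \<le> max M 0"
      using near \<open>0 \<le> t\<close> False by (simp add: le_max_iff_disj)
    then have "a / ?p * (x \<bullet> b t x) \<le> a / ?p * max M 0"
      using \<open>0 < a\<close> japanese_bracket_pos [of x] by (intro mult_left_mono) auto
    also have "\<dots> \<le> a * max M 0"
      using \<open>0 < a\<close> japanese_bracket_ge_1 [of x] by (intro mult_right_mono) (auto simp: divide_le_eq)
    finally have "Va a x * (a / ?p * (x \<bullet> b t x) + K) \<le> Va a x * (a * max M 0 + K)"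
      by (intro mult_left_mono) (simp_all add: Va_def)
    then have "G t x \<le> Va a x * (a * max M 0 + K)"
      using G [rule_format, OF \<open>0 \<le> t\<close>, of x] by linarith
    also have "\<dots> \<le> V\<^sub>R * (a * max M 0 + K)"
      using \<open>Va a x \<le> V\<^sub>R\<close> \<open>0 < a\<close> \<open>0 \<le> K\<close> by (intro mult_right_mono) auto
    finally show ?thesis
      using \<open>Va a x \<le> V\<^sub>R\<close> by (simp add: \<rho>_def algebra_simps)
  qed
  with \<open>0 < \<rho>\<close> show ?thesis by blast
qed

theorem lemma4:
  fixes \<Psi> :: "real^'n \<Rightarrow> real"
    and B :: "real \<Rightarrow> real^'n \<Rightarrow> real^'n^'n"
    and L nB \<delta> \<beta>l \<beta>u :: real
  assumes A1_C2: "C2_fun \<Psi>"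
    and A1_Lip: "\<forall>x y. norm (grad \<Psi> x - grad \<Psi> y) \<le> L * norm (x - y)"
    and A1_zero: "grad \<Psi> 0 = 0"
    and A2_sym: "\<forall>t\<ge>0. \<forall>x. transpose (B t x) = B t x"
    and A2_pos: "\<beta>l > 0" "\<beta>u > 0"
    and A2_bounds: "\<forall>t\<ge>0. \<forall>x v. \<beta>l * (v \<bullet> v) \<le> v \<bullet> (B t x *v v) \<and> v \<bullet> (B t x *v v) \<le> \<beta>u * (v \<bullet> v)"
    and A3_C2: "\<forall>t\<ge>0. \<forall>i j. C2_fun (\<lambda>x. B t x $ i $ j)"
    and A3_pos: "L > 0" "nB > 0" "\<delta> \<ge> 1/2"
    and A3_space: "\<forall>t>0. \<forall>x y.
        max (opnorm (B t x - B t y)) (norm (divM (B t) x - divM (B t) y))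
          \<le> L * (1 + norm x powr nB + norm y powr nB) * norm (x - y)"
    and A3_time: "\<forall>s>0. \<forall>t>0. \<forall>x.
        max (opnorm (B s x - B t x)) (norm (divM (B s) x - divM (B t) x))
          \<le> L * (1 + norm x powr nB) * \<bar>s - t\<bar> powr \<delta>"
    and A4_dir: "\<exists>l<0. ((\<lambda>r. Sup {((1 / norm x) *\<^sub>R x) \<bullet> ((1 / norm (drift B \<Psi> t x)) *\<^sub>R drift B \<Psi> t x)
                              | x t. norm x \<ge> r \<and> t \<ge> 0}) \<longlongrightarrow> l) at_top"
    and A4_mag: "filterlim (\<lambda>r. Inf {norm (drift B \<Psi> t x) | x t. norm x \<ge> r \<and> t \<ge> 0}) at_top at_top"
  shows "\<forall>a>0. \<exists>lam>0. \<exists>\<rho>>0. \<forall>t\<ge>0. \<forall>x.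
           genL B \<Psi> t (Va a) x \<le> - lam * Va a x + \<rho>"
proof (intro allI impI)
  fix a :: real
  assume "0 < a"
  define K where "K = a * real CARD('n) * \<beta>u + a\<^sup>2 * \<beta>u"
  have "0 \<le> K"
    using \<open>0 < a\<close> A2_pos by (simp add: K_def)
  have form: "\<forall>t\<ge>0. \<forall>x v. 0 \<le> v \<bullet> (B t x *v v) \<and> v \<bullet> (B t x *v v) \<le> \<beta>u * (v \<bullet> v)"
    using A2_bounds A2_pos(1) by (meson inner_ge_zero mult_nonneg_nonneg order_trans less_imp_le)
  have gen: "\<forall>t\<ge>0. \<forall>x. genL B \<Psi> t (Va a) x
      \<le> Va a x * (a / japanese_bracket x * (x \<bullet> drift B \<Psi> t x) + K)"
    unfolding K_def add.assoc [symmetric]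
    using \<open>0 < a\<close> A2_pos(2) A3_C2 A2_sym form
    by (intro allI impI genL_Va_le) (auto simp: C2_fun_def C1_fun_def)
  obtain R where "1 \<le> R"
    and far: "\<forall>t\<ge>0. \<forall>x. R \<le> norm x \<longrightarrow> x \<bullet> drift B \<Psi> t x \<le> - (2 * (K + 1) / a) * norm x"
    using ex_radius_inner_le_neg_norm [OF A4_dir A4_mag] by blast
  then have sphere: "\<forall>t\<ge>0. \<forall>y. norm y = R \<longrightarrow> y \<bullet> drift B \<Psi> t y \<le> 0"
    using \<open>0 < a\<close> \<open>0 \<le> K\<close> by (fastforce intro: order_trans [OF _ mult_nonpos_nonneg])
  have cont0: "\<forall>i j. continuous_on UNIV (partial (\<lambda>x. B 0 x $ i $ j) j)"
    using A3_C2 by (simp add: C2_fun_def C1_fun_def)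
  have div_Lip: "\<forall>t>0. \<forall>x y. norm (divM (B t) x - divM (B t) y)
      \<le> L * (1 + norm x powr nB + norm y powr nB) * norm (x - y)"
    using A3_space by simp
  have "\<exists>M. \<forall>t\<ge>0. \<forall>x. norm x \<le> R \<longrightarrow> x \<bullet> drift B \<Psi> t x \<le> M"
    by (rule inner_drift_bounded_on_cball [OF A1_Lip A1_zero A2_sym form _ cont0 div_Lip _ _ _ sphere])
      (use A2_pos A3_pos \<open>1 \<le> R\<close> in auto)
  then obtain M where near: "\<forall>t\<ge>0. \<forall>x. norm x \<le> R \<longrightarrow> x \<bullet> drift B \<Psi> t x \<le> M"
    by blast
  obtain \<rho> where "0 < \<rho>" "\<forall>t\<ge>0. \<forall>x. genL B \<Psi> t (Va a) x \<le> - Va a x + \<rho>"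
    using Va_drift_condition [OF \<open>0 < a\<close> \<open>0 \<le> K\<close> \<open>1 \<le> R\<close> gen far near] by blast
  then show "\<exists>lam>0. \<exists>\<rho>>0. \<forall>t\<ge>0. \<forall>x. genL B \<Psi> t (Va a) x \<le> - lam * Va a x + \<rho>"
    by (intro exI [of _ 1]) auto
qed

end
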